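(* Let $a>0$ and let \[ h(s)=\frac{a^2s^2}{(1-a)s^2+2s+1}. \] Define the family of real rational transfer functions $(F_N)_{N\in\mathbb{N}}$ recursively by \[ F_{N+1}(s)=\frac{F_N(s)+h(s)}{F_N(s)+h(s)+1},\qquad F_0(s)=0. \] Then \[ \sup_{N\in\mathbb{N}}\|F_N\|_\infty\le a . \]
   Context: For a transfer function $G$ (a function of the complex variable $s$), $\|G\|_\infty:=\sup_{s\in\mathbb{C}_+}|G(s)|$, where $\mathbb{C}_+$ denotes the open right half of the complex plane; the space $\mathscr{H}_\infty$ consists of the transfer functions analytic on $\mathbb{C}_+$ with finite such norm. *)

theory Defs
  imports "HOL-Analysis.Analysis" "HOL-Computational_Algebra.Computational_Algebra" "HOL-Computational_Algebra.Field_as_Ring" "HOL-Computational_Algebra.Polynomial_Factorial" "HOL-Computational_Algebra.Normalized_Fraction"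
    "HOL-Library.Extended_Real"
begin

text \<open>Real rational transfer functions are modelled as elements of the field of
  rational functions \<open>complex poly fract\<close> (with real coefficients where needed).
  Evaluation uses the reduced (coprime) numerator/denominator representation,
  so that removable singularities are removed.\<close>

definition rnum :: "complex poly fract \<Rightarrow> complex poly" where
  "rnum G = fst (quot_of_fract G)"

definition rden :: "complex poly fract \<Rightarrow> complex poly" where
  "rden G = snd (quot_of_fract G)"

definition reval :: "complex poly fract \<Rightarrow> complex \<Rightarrow> complex" where
  "reval G s = poly (rnum G) s / poly (rden G) s"

definition in_Hinf :: "complex poly fract \<Rightarrow> bool" where
  "in_Hinf G \<longleftrightarrow> (reval G) holomorphic_on {s. 0 < Re s} \<and>
                  (\<forall>s. 0 < Re s \<longrightarrow> poly (rden G) s \<noteq> 0) \<and>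
                  bounded (reval G ` {s. 0 < Re s})"

definition Hinf_norm :: "complex poly fract \<Rightarrow> ereal" where
  "Hinf_norm G = (if in_Hinf G then (SUP s\<in>{s. 0 < Re s}. ereal (cmod (reval G s))) else \<infinity>)"

definition hfun :: "real \<Rightarrow> complex poly fract" where
  "hfun a = Fract [:0, 0, complex_of_real (a^2):] [:1, 2, complex_of_real (1 - a):]"

fun Ffam :: "real \<Rightarrow> nat \<Rightarrow> complex poly fract" where
  "Ffam a 0 = 0"
| "Ffam a (Suc N) = (Ffam a N + hfun a) / (Ffam a N + hfun a + 1)"

end

theory Submission
  imports Defs
begin

text \<open>Evaluated at a point \<open>s\<close> with \<open>h = h(s)\<close>, the recursion becomes a linear one,
  \<open>F\<^sub>N = d\<^sub>N / x\<^sub>N\<close> with \<open>d\<^sub>N\<^sub>+\<^sub>1 = d\<^sub>N + h x\<^sub>N\<close> and \<open>x\<^sub>N\<^sub>+\<^sub>1 = x\<^sub>N + d\<^sub>N\<^sub>+\<^sub>1\<close>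
  (the numerator and denominator of a ladder network).  Two telescoping identities
  express \<open>d\<^sub>N conj x\<^sub>N\<close> and \<open>|d\<^sub>N|\<^sup>2\<close> through the energies \<open>X = \<Sum>|x\<^sub>j|\<^sup>2\<close> and
  \<open>D = \<Sum>|d\<^sub>j\<^sub>+\<^sub>1|\<^sup>2\<close>; with Cauchy-Schwarz they give \<open>|d\<^sub>N|\<^sup>2 \<le> D y (2 - y)\<close> and
  \<open>|h| |d\<^sub>N| |x\<^sub>N| = D |h + y\<^sup>2|\<close> for \<open>y = |h| (X/D)\<^sup>1\<^sup>/\<^sup>2 \<in> [0,2]\<close>.  So
  \<open>|F\<^sub>N| \<le> a\<close> follows from the scalar inequality \<open>y (2 - y) |h| \<le> a |h + y\<^sup>2|\<close>, which
  for the given \<open>h\<close> and \<open>Re s > 0\<close> is an explicit estimate on a quadratic in \<open>1 + 1/s\<close>.\<close>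

text \<open>For \<open>h = H / D\<close> these are \<open>D\<^sup>N d\<^sub>N\<close> and \<open>D\<^sup>N x\<^sub>N\<close>, which keeps them polynomial.\<close>

fun ladder_num :: "'a::comm_ring_1 \<Rightarrow> 'a \<Rightarrow> nat \<Rightarrow> 'a"
and ladder_den :: "'a::comm_ring_1 \<Rightarrow> 'a \<Rightarrow> nat \<Rightarrow> 'a" where
  "ladder_num H D 0 = 0"
| "ladder_num H D (Suc k) = D * ladder_num H D k + H * ladder_den H D k"
| "ladder_den H D 0 = 1"
| "ladder_den H D (Suc k) = ladder_num H D (Suc k) + D * ladder_den H D k"

lemma ladder_poly:
  "poly (ladder_num H D k) s = ladder_num (poly H s) (poly D s) k \<and>
   poly (ladder_den H D k) s = ladder_den (poly H s) (poly D s) k"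
  by (induction k) simp_all

lemma ladder_homogeneous:
  fixes H D :: "'a::field"
  assumes "D \<noteq> 0"
  shows "ladder_num H D k = D ^ k * ladder_num (H / D) 1 k \<and>
         ladder_den H D k = D ^ k * ladder_den (H / D) 1 k"
  by (induction k) (use assms in \<open>simp_all add: algebra_simps\<close>)

lemma ladder_degenerate: "ladder_den H 0 k = H ^ k" "ladder_num H 0 (Suc k) = H ^ Suc k"
proof -
  show "ladder_den H 0 k = H ^ k"
    by (induction k) simp_all
  then show "ladder_num H 0 (Suc k) = H ^ Suc k"
    by simp
qed

lemma ladder_not_both_zero: "ladder_num h 1 k \<noteq> 0 \<or> ladder_den h 1 k \<noteq> 0"
  by (induction k) (auto simp: add_eq_0_iff)

lemma ladder_num_cnj_den:
  "ladder_num h 1 N * cnj (ladder_den h 1 N) =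
     h * of_real (\<Sum>j<N. (cmod (ladder_den h 1 j))\<^sup>2) + of_real (\<Sum>j<N. (cmod (ladder_num h 1 (Suc j)))\<^sup>2)"
proof (induction N)
  case (Suc N)
  let ?d = "ladder_num h 1 N" and ?x = "ladder_den h 1 N" and ?d' = "ladder_num h 1 (Suc N)"
  have "d' * cnj (d' + x) = d * cnj x + h * (x * cnj x) + d' * cnj d'" if "d' = d + h * x" for d d' x
    using that by (simp add: algebra_simps)
  then have "?d' * cnj (ladder_den h 1 (Suc N)) = ?d * cnj ?x + h * (?x * cnj ?x) + ?d' * cnj ?d'"
    by simp
  also have "\<dots> = h * of_real (\<Sum>j<Suc N. (cmod (ladder_den h 1 j))\<^sup>2) +
                    of_real (\<Sum>j<Suc N. (cmod (ladder_num h 1 (Suc j)))\<^sup>2)"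
    unfolding Suc.IH sum.lessThan_Suc of_real_add complex_norm_square by (simp add: algebra_simps)
  finally show ?case .
qed simp

lemma ladder_cross_energy:
  "2 * Re (h * cnj (\<Sum>j<N. cnj (ladder_den h 1 j) * ladder_num h 1 (Suc j))) =
     (cmod (ladder_num h 1 N))\<^sup>2 + (cmod h)\<^sup>2 * (\<Sum>j<N. (cmod (ladder_den h 1 j))\<^sup>2)"
proof (induction N)
  case (Suc N)
  let ?d = "ladder_num h 1 N" and ?u = "h * ladder_den h 1 N"
  have norm_add: "2 * Re (u * cnj (d + u)) = (cmod (d + u))\<^sup>2 - (cmod d)\<^sup>2 + (cmod u)\<^sup>2" for d u :: complex
    unfolding cmod_power2 by (simp add: power2_eq_square algebra_simps)
  have "2 * Re (?u * cnj (?d + ?u)) =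
      (cmod (ladder_num h 1 (Suc N)))\<^sup>2 - (cmod ?d)\<^sup>2 + (cmod h)\<^sup>2 * (cmod (ladder_den h 1 N))\<^sup>2"
    unfolding norm_add by (simp add: norm_mult power_mult_distrib)
  moreover have "2 * Re (h * cnj (\<Sum>j<Suc N. cnj (ladder_den h 1 j) * ladder_num h 1 (Suc j))) =
      2 * Re (h * cnj (\<Sum>j<N. cnj (ladder_den h 1 j) * ladder_num h 1 (Suc j))) + 2 * Re (?u * cnj (?d + ?u))"
    by (simp add: algebra_simps)
  ultimately show ?case
    using Suc.IH by (simp add: algebra_simps)
qed simp

lemma ladder_energy_bound:
  fixes h :: complex and N :: nat
  defines "X \<equiv> \<Sum>j<N. (cmod (ladder_den h 1 j))\<^sup>2"
    and "D \<equiv> \<Sum>j<N. (cmod (ladder_num h 1 (Suc j)))\<^sup>2"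
  shows "(cmod (ladder_num h 1 N))\<^sup>2 + (cmod h)\<^sup>2 * X \<le> 2 * cmod h * sqrt (X * D)"
proof -
  let ?S = "\<Sum>j<N. cnj (ladder_den h 1 j) * ladder_num h 1 (Suc j)"
  have "cmod ?S \<le> (\<Sum>j<N. cmod (ladder_den h 1 j) * cmod (ladder_num h 1 (Suc j)))"
    by (rule order_trans[OF norm_sum]) (simp add: norm_mult)
  also have "\<dots> \<le> sqrt (X * D)"
    unfolding X_def D_def by (rule real_le_rsqrt) (rule Cauchy_Schwarz_ineq_sum)
  finally have "cmod h * cmod ?S \<le> cmod h * sqrt (X * D)"
    by (simp add: mult_left_mono)
  moreover have "Re (h * cnj ?S) \<le> cmod h * cmod ?S"
    using complex_Re_le_cmod[of "h * cnj ?S"] by (simp only: norm_mult complex_mod_cnj)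
  ultimately have "2 * Re (h * cnj ?S) \<le> 2 * cmod h * sqrt (X * D)"
    by linarith
  then show ?thesis
    unfolding X_def ladder_cross_energy .
qed

lemma norm_le_of_energy_bounds:
  fixes h d x :: complex and a X D :: real
  assumes "a > 0" "h \<noteq> 0" "X > 0" "D > 0"
    and cross: "d * cnj x = h * of_real X + of_real D"
    and energy: "(cmod d)\<^sup>2 + (cmod h)\<^sup>2 * X \<le> 2 * cmod h * sqrt (X * D)"
    and coeff: "\<And>y. 0 \<le> y \<Longrightarrow> y \<le> 2 \<Longrightarrow> y * (2 - y) * cmod h \<le> a * cmod (h + of_real (y\<^sup>2))"
  shows "cmod d \<le> a * cmod x"
proof -
  define y where "y = cmod h * sqrt (X / D)"
  have "y \<ge> 0"
    using assms by (simp add: y_def)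
  have y_sq: "y\<^sup>2 * D = (cmod h)\<^sup>2 * X"
    using assms by (simp add: y_def power_mult_distrib)
  have "y * D = cmod h * sqrt (X * D)"
    using assms by (simp add: y_def real_sqrt_divide real_sqrt_mult field_simps)
  then have d_sq: "(cmod d)\<^sup>2 \<le> D * (y * (2 - y))"
    using energy y_sq by (simp add: algebra_simps power2_eq_square)
  then have "0 \<le> D * (y * (2 - y))"
    by (meson order_trans zero_le_power2)
  then have "0 \<le> y * (2 - y)"
    using \<open>D > 0\<close> by (simp add: zero_le_mult_iff)
  then have "y \<le> 2"
    using \<open>y \<ge> 0\<close> by (auto simp: zero_le_mult_iff)
  have "cnj h * h * of_real X = of_real (y\<^sup>2 * D)"
    using y_sq by (metis complex_norm_square mult.commute of_real_mult)
  then have "cnj h * (d * cnj x) = of_real D * cnj (h + of_real (y\<^sup>2))"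
    using cross by (simp add: algebra_simps)
  then have prod: "cmod h * (cmod d * cmod x) = D * cmod (h + of_real (y\<^sup>2))"
    using \<open>D > 0\<close> by (metis abs_of_pos complex_mod_cnj norm_mult norm_of_real)
  have "cmod h * (cmod d)\<^sup>2 \<le> D * (y * (2 - y) * cmod h)"
    using mult_left_mono[OF d_sq, of "cmod h"] by (simp add: algebra_simps)
  also have "\<dots> \<le> D * (a * cmod (h + of_real (y\<^sup>2)))"
    using coeff[OF \<open>y \<ge> 0\<close> \<open>y \<le> 2\<close>] \<open>D > 0\<close> by simp
  also have "\<dots> = cmod h * (cmod d * (a * cmod x))"
    using prod by (simp add: algebra_simps)
  finally have "cmod d * cmod d \<le> cmod d * (a * cmod x)"
    using \<open>h \<noteq> 0\<close> by (simp add: power2_eq_square)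
  then show ?thesis
    using \<open>a > 0\<close> by (cases "d = 0") auto
qed

lemma ladder_num_le:
  fixes h :: complex
  assumes "a > 0" "h \<noteq> 0"
    and coeff: "\<And>y. 0 \<le> y \<Longrightarrow> y \<le> 2 \<Longrightarrow> y * (2 - y) * cmod h \<le> a * cmod (h + of_real (y\<^sup>2))"
  shows "cmod (ladder_num h 1 N) \<le> a * cmod (ladder_den h 1 N)"
proof (cases N)
  case (Suc M)
  let ?X = "\<Sum>j<N. (cmod (ladder_den h 1 j))\<^sup>2" and ?D = "\<Sum>j<N. (cmod (ladder_num h 1 (Suc j)))\<^sup>2"
  have "(\<Sum>j\<in>{0}. (cmod (ladder_den h 1 j))\<^sup>2) \<le> ?X"
    using Suc by (intro sum_mono2) auto
  then have "?X > 0"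
    by simp
  have "0 < (\<Sum>j\<in>{0}. (cmod (ladder_num h 1 (Suc j)))\<^sup>2)"
    using \<open>h \<noteq> 0\<close> by simp
  also have "\<dots> \<le> ?D"
    using Suc by (intro sum_mono2) auto
  finally have "?D > 0" .
  show ?thesis
    by (rule norm_le_of_energy_bounds[OF assms(1,2) \<open>?X > 0\<close> \<open>?D > 0\<close>
          ladder_num_cnj_den ladder_energy_bound coeff])
qed (use assms in simp)

lemma mult_le_of_square_mult_lt:
  fixes a y :: real
  assumes "a > 0" "0 \<le> y" "y \<le> 2" "y\<^sup>2 * (1 + a) < a\<^sup>2"
  shows "(4 + a) * y \<le> 4 * a"
proof (cases "a \<ge> 4")
  case True
  have "(4 + a) * y \<le> (4 + a) * 2"
    by (rule mult_left_mono) (use assms in auto)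
  also have "\<dots> \<le> 4 * a"
    using True by simp
  finally show ?thesis .
next
  case False
  have "((4 + a) * y)\<^sup>2 * (1 + a) = (4 + a)\<^sup>2 * (y\<^sup>2 * (1 + a))"
    by (simp add: power_mult_distrib)
  also have "\<dots> \<le> (4 + a)\<^sup>2 * a\<^sup>2"
    by (rule mult_left_mono) (use assms in auto)
  also have "\<dots> \<le> (4 * a)\<^sup>2 * (1 + a)"
  proof -
    have "0 \<le> a ^ 3 * (8 - a)"
      using False assms by simp
    then show ?thesis
      by (simp add: power2_eq_square power3_eq_cube algebra_simps)
  qed
  finally have "((4 + a) * y)\<^sup>2 \<le> (4 * a)\<^sup>2"
    by (rule mult_right_le_imp_le) (use assms in auto)
  then show ?thesis
    by (rule power2_le_imp_le) (use assms in auto)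
qed

text \<open>According to the sign of \<open>K - p\<^sup>2\<close>, the right-hand side is written as
  \<open>(K + p\<^sup>2)\<^sup>2 + q\<^sup>2 (q\<^sup>2 + 2 p\<^sup>2 - 2 K)\<close> or as \<open>(K - p\<^sup>2 - q\<^sup>2)\<^sup>2 + 4 p\<^sup>2 K\<close>.\<close>

lemma re_im_quartic_lower_bound:
  fixes a y p q :: real
  assumes "a > 0" "0 \<le> y" "y \<le> 2" "y \<le> p"
  defines "K \<equiv> a\<^sup>2 - a * y\<^sup>2"
  shows "(a * y * (2 - y))\<^sup>2 \<le> (K + p\<^sup>2 - q\<^sup>2)\<^sup>2 + (2 * p * q)\<^sup>2"
proof -
  have "y\<^sup>2 \<le> p\<^sup>2"
    using assms by (simp add: power_mono)
  show ?thesis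
  proof (cases "K \<le> p\<^sup>2")
    case True
    have "0 \<le> q\<^sup>2 * (q\<^sup>2 + 2 * p\<^sup>2 - 2 * K)"
      using True zero_le_power2[of q] by (intro mult_nonneg_nonneg) linarith+
    have "K + y\<^sup>2 - a * y * (2 - y) = (a - y)\<^sup>2"
      unfolding K_def by (simp add: power2_eq_square algebra_simps)
    then have "a * y * (2 - y) \<le> K + p\<^sup>2"
      using \<open>y\<^sup>2 \<le> p\<^sup>2\<close> by (smt (verit) zero_le_power2)
    then have "(a * y * (2 - y))\<^sup>2 \<le> (K + p\<^sup>2)\<^sup>2"
      using assms by (simp add: power_mono)
    also have "\<dots> \<le> (K + p\<^sup>2)\<^sup>2 + q\<^sup>2 * (q\<^sup>2 + 2 * p\<^sup>2 - 2 * K)"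
      using \<open>0 \<le> q\<^sup>2 * (q\<^sup>2 + 2 * p\<^sup>2 - 2 * K)\<close> by simp
    also have "\<dots> = (K + p\<^sup>2 - q\<^sup>2)\<^sup>2 + (2 * p * q)\<^sup>2"
      by (simp add: power2_eq_square algebra_simps)
    finally show ?thesis .
  next
    case False
    then have "y\<^sup>2 * (1 + a) < a\<^sup>2"
      using \<open>y\<^sup>2 \<le> p\<^sup>2\<close> by (simp add: K_def algebra_simps)
    then have "0 \<le> a * y ^ 3 * (4 * a - (4 + a) * y)"
      using mult_le_of_square_mult_lt[of a y] assms by simp
    then have "(a * y * (2 - y))\<^sup>2 \<le> 4 * y\<^sup>2 * K"
      unfolding K_def by (simp add: power2_eq_square power3_eq_cube algebra_simps)
    also have "\<dots> \<le> 4 * p\<^sup>2 * K"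
      by (rule mult_right_mono) (use False \<open>y\<^sup>2 \<le> p\<^sup>2\<close> zero_le_power2[of p] in linarith)+
    also have "\<dots> \<le> (K - q\<^sup>2 - p\<^sup>2)\<^sup>2 + 4 * p\<^sup>2 * K"
      by simp
    also have "\<dots> = (K + p\<^sup>2 - q\<^sup>2)\<^sup>2 + (2 * p * q)\<^sup>2"
      by (simp add: power2_eq_square algebra_simps)
    finally show ?thesis .
  qed
qed

lemma norm_of_real_add_square_ge:
  fixes a y :: real and c :: complex
  assumes "a > 0" "0 \<le> y" "y \<le> 2" "y \<le> Re c"
  shows "a * y * (2 - y) \<le> cmod (of_real (a\<^sup>2 - a * y\<^sup>2) + c\<^sup>2)"
proof -
  let ?K = "a\<^sup>2 - a * y\<^sup>2"
  have "(cmod (of_real ?K + c\<^sup>2))\<^sup>2 = (?K + (Re c)\<^sup>2 - (Im c)\<^sup>2)\<^sup>2 + (2 * Re c * Im c)\<^sup>2"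
    unfolding cmod_power2 by (simp add: power2_eq_square algebra_simps)
  then have "(a * y * (2 - y))\<^sup>2 \<le> (cmod (of_real ?K + c\<^sup>2))\<^sup>2"
    using re_im_quartic_lower_bound[OF assms] by simp
  then show ?thesis
    by (rule power2_le_imp_le) simp
qed

text \<open>The substitution \<open>c = y (1 + 1/s)\<close> turns the estimate into the previous one,
  since \<open>Re (1/s) \<ge> 0\<close> on the right half plane.\<close>

lemma norm_quadratic_right_half_plane_ge:
  fixes a y :: real and s :: complex
  assumes "a > 0" "0 \<le> y" "y \<le> 2" "Re s > 0"
  shows "a * y * (2 - y) * (cmod s)\<^sup>2 \<le> cmod (of_real (a\<^sup>2 - a * y\<^sup>2) * s\<^sup>2 + of_real (y\<^sup>2) * (1 + s)\<^sup>2)"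
proof -
  have "s \<noteq> 0"
    using assms by auto
  define c where "c = of_real y * ((1 + s) / s)"
  have "(1 + s) / s = 1 + 1 / s"
    using \<open>s \<noteq> 0\<close> by (simp add: add_divide_distrib)
  moreover have "y * 1 \<le> y * (1 + Re s / (cmod s)\<^sup>2)"
    by (rule mult_left_mono) (use assms in auto)
  ultimately have "y \<le> Re c"
    by (simp add: c_def Re_divide cmod_power2)
  then have "a * y * (2 - y) * (cmod s)\<^sup>2 \<le> cmod (of_real (a\<^sup>2 - a * y\<^sup>2) + c\<^sup>2) * (cmod s)\<^sup>2"
    using norm_of_real_add_square_ge[OF assms(1-3)] by (simp add: mult_right_mono)
  also have "\<dots> = cmod (s\<^sup>2 * (of_real (a\<^sup>2 - a * y\<^sup>2) + c\<^sup>2))"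
    by (simp add: norm_mult norm_power)
  also have "s\<^sup>2 * c\<^sup>2 = of_real (y\<^sup>2) * (1 + s)\<^sup>2"
    using \<open>s \<noteq> 0\<close> by (simp add: c_def power_mult_distrib power_divide)
  then have "s\<^sup>2 * (of_real (a\<^sup>2 - a * y\<^sup>2) + c\<^sup>2) = of_real (a\<^sup>2 - a * y\<^sup>2) * s\<^sup>2 + of_real (y\<^sup>2) * (1 + s)\<^sup>2"
    by (simp add: distrib_left mult.commute)
  finally show ?thesis .
qed

definition hfun_num :: "real \<Rightarrow> complex poly" where
  "hfun_num a = [:0, 0, complex_of_real (a\<^sup>2):]"

definition hfun_den :: "real \<Rightarrow> complex poly" where
  "hfun_den a = [:1, 2, complex_of_real (1 - a):]"

lemma hfun_eq_Fract: "hfun a = Fract (hfun_num a) (hfun_den a)"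
  by (simp add: hfun_def hfun_num_def hfun_den_def)

lemma poly_hfun_num: "poly (hfun_num a) s = of_real (a\<^sup>2) * s\<^sup>2"
  by (simp add: hfun_num_def power2_eq_square algebra_simps)

lemma poly_hfun_den: "poly (hfun_den a) s = 1 + 2 * s + of_real (1 - a) * s\<^sup>2"
  by (simp add: hfun_den_def power2_eq_square algebra_simps)

lemma hfun_den_nonzero: "hfun_den a \<noteq> 0"
  using poly_hfun_den[of a 0] by auto

lemma hfun_value_bound:
  fixes y :: real and s :: complex
  assumes "a > 0" "Re s > 0" "poly (hfun_den a) s \<noteq> 0" "0 \<le> y" "y \<le> 2"
  defines "h \<equiv> poly (hfun_num a) s / poly (hfun_den a) s"
  shows "y * (2 - y) * cmod h \<le> a * cmod (h + of_real (y\<^sup>2))"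
proof -
  let ?D = "poly (hfun_den a) s"
  define Q where "Q = of_real (a\<^sup>2 - a * y\<^sup>2) * s\<^sup>2 + of_real (y\<^sup>2) * (1 + s)\<^sup>2"
  have "y * (2 - y) * cmod h = a * (a * y * (2 - y) * (cmod s)\<^sup>2) / cmod ?D"
    by (simp add: h_def poly_hfun_num norm_divide norm_mult norm_power power2_eq_square)
  also have "\<dots> \<le> a * cmod Q / cmod ?D"
    using norm_quadratic_right_half_plane_ge[OF assms(1,4,5,2)] assms
    by (simp add: Q_def divide_right_mono)
  also have "Q / ?D = h + of_real (y\<^sup>2)"
    using assms by (simp add: Q_def h_def poly_hfun_num poly_hfun_den field_simps power2_eq_square)
  then have "a * cmod Q / cmod ?D = a * cmod (h + of_real (y\<^sup>2))"
    by (metis norm_divide times_divide_eq_right)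
  finally show ?thesis .
qed

lemma hfun_den_root_ge_one:
  assumes "Re s > 0" "poly (hfun_den a) s = 0"
  shows "a \<ge> 1"
proof -
  have "s \<noteq> 0"
    using assms by auto
  define b where "b = 1 + 1 / s"
  have "b\<^sup>2 = of_real a"
    using assms \<open>s \<noteq> 0\<close> by (simp add: b_def poly_hfun_den field_simps power2_eq_square)
  have "Re b \<ge> 1"
    using assms by (simp add: b_def Re_divide cmod_power2)
  moreover have "Im (b\<^sup>2) = 2 * Re b * Im b"
    by (simp add: power2_eq_square)
  ultimately have "Im b = 0"
    using \<open>b\<^sup>2 = of_real a\<close> by simp
  then have "a = (Re b)\<^sup>2"
    using \<open>b\<^sup>2 = of_real a\<close> by (metis Re_complex_of_real Re_power_real)
  with \<open>Re b \<ge> 1\<close> show ?thesis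
    by simp
qed

lemma hfun_ladder_bound:
  assumes "a > 0" "Re s > 0"
  defines "H \<equiv> hfun_num a" and "D \<equiv> hfun_den a"
  shows "poly (ladder_den H D N) s \<noteq> 0 \<and>
         cmod (poly (ladder_num H D N) s) \<le> a * cmod (poly (ladder_den H D N) s)"
proof -
  have "poly H s \<noteq> 0"
    using assms by (auto simp: H_def poly_hfun_num)
  show ?thesis
  proof (cases "poly D s = 0")
    case True
    then have "a \<ge> 1"
      using hfun_den_root_ge_one assms by blast
    have "cmod (poly (ladder_num H D N) s) \<le> cmod (poly (ladder_den H D N) s)"
      using True by (cases N) (simp_all add: ladder_poly ladder_degenerate)
    also have "\<dots> \<le> a * cmod (poly (ladder_den H D N) s)"
      using \<open>a \<ge> 1\<close> by (simp add: mult_le_cancel_right1)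
    finally show ?thesis
      using True \<open>poly H s \<noteq> 0\<close> by (simp add: ladder_poly ladder_degenerate)
  next
    case False
    define h where "h = poly H s / poly D s"
    have "h \<noteq> 0"
      using False \<open>poly H s \<noteq> 0\<close> by (simp add: h_def)
    have num: "poly (ladder_num H D N) s = poly D s ^ N * ladder_num h 1 N"
      and den: "poly (ladder_den H D N) s = poly D s ^ N * ladder_den h 1 N"
      using ladder_homogeneous[OF False] by (simp_all add: ladder_poly h_def)
    have bound: "cmod (ladder_num h 1 N) \<le> a * cmod (ladder_den h 1 N)"
      using ladder_num_le[OF \<open>a > 0\<close> \<open>h \<noteq> 0\<close>] hfun_value_bound[OF assms(1,2)] False
      by (simp add: h_def H_def D_def)
    then have "ladder_den h 1 N \<noteq> 0"
      using ladder_not_both_zero[of h N] by auto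
    moreover have "cmod (poly D s) ^ N * cmod (ladder_num h 1 N) \<le> cmod (poly D s) ^ N * (a * cmod (ladder_den h 1 N))"
      using bound by (simp add: mult_left_mono)
    ultimately show ?thesis
      using False by (simp add: num den norm_mult norm_power mult.left_commute)
  qed
qed

lemma ladder_den_hfun_nonzero: "a > 0 \<Longrightarrow> ladder_den (hfun_num a) (hfun_den a) N \<noteq> 0"
  using hfun_ladder_bound[of a 1 N] by auto

lemma Ffam_eq_Fract:
  assumes "a > 0"
  shows "Ffam a N = Fract (ladder_num (hfun_num a) (hfun_den a) N) (ladder_den (hfun_num a) (hfun_den a) N)"
proof (induction N)
  case 0
  then show ?case
    by (simp add: Zero_fract_def)
next
  case (Suc N)
  let ?H = "hfun_num a" and ?D = "hfun_den a"
  let ?q = "ladder_den ?H ?D N"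
  have "?q * ?D \<noteq> 0"
    using ladder_den_hfun_nonzero[OF assms] hfun_den_nonzero by simp
  have sum: "Ffam a N + hfun a = Fract (ladder_num ?H ?D (Suc N)) (?q * ?D)"
    using ladder_den_hfun_nonzero[OF assms] hfun_den_nonzero
    by (simp add: Suc.IH hfun_eq_Fract algebra_simps)
  have "Ffam a N + hfun a + 1 = Fract (ladder_den ?H ?D (Suc N)) (?q * ?D)"
    unfolding sum One_fract_def using \<open>?q * ?D \<noteq> 0\<close> by (simp add: algebra_simps)
  with sum have "Ffam a (Suc N) = Fract ((?q * ?D) * ladder_num ?H ?D (Suc N)) ((?q * ?D) * ladder_den ?H ?D (Suc N))"
    by (simp add: mult.commute)
  then show ?case
    using mult_fract_cancel[OF \<open>?q * ?D \<noteq> 0\<close>] by simp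
qed

text \<open>The reduced representative used by \<open>reval\<close> can only lose common roots, so away
  from the roots of \<open>q\<close> it agrees with \<open>p / q\<close>.\<close>

lemma reval_Fract:
  assumes "q \<noteq> 0" "poly q s \<noteq> 0"
  shows "poly (rden (Fract p q)) s \<noteq> 0 \<and> reval (Fract p q) s = poly p s / poly q s"
proof -
  obtain r t where rt: "quot_of_fract (Fract p q) = (r, t)"
    by (cases "quot_of_fract (Fract p q)")
  have "(r, t) \<in> normalized_fracts"
    using quot_of_fract_in_normalized_fracts[of "Fract p q"] rt by simp
  then have "coprime r t" "t \<noteq> 0"
    by (auto simp: normalized_fracts_def)
  have "quot_to_fract (quot_of_fract (Fract p q)) = Fract p q"
    by simp
  then have "Fract r t = Fract p q"
    using rt by (simp add: quot_to_fract_def)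
  then have "r * q = p * t"
    using \<open>t \<noteq> 0\<close> \<open>q \<noteq> 0\<close> by (simp add: eq_fract)
  then have cross: "poly r s * poly q s = poly p s * poly t s"
    by (metis poly_mult)
  have "poly t s \<noteq> 0"
    using cross assms coprime_poly_0[OF \<open>coprime r t\<close>, of s] by auto
  with cross assms show ?thesis
    by (simp add: reval_def rnum_def rden_def rt field_simps)
qed

lemma Hinf_norm_Fract_le:
  assumes "q \<noteq> 0"
    and bound: "\<And>s. 0 < Re s \<Longrightarrow> poly q s \<noteq> 0 \<and> cmod (poly p s) \<le> a * cmod (poly q s)"
  shows "Hinf_norm (Fract p q) \<le> ereal a"
proof -
  let ?G = "Fract p q" and ?RHP = "{s. 0 < Re s}"
  have pointwise: "poly (rden ?G) s \<noteq> 0 \<and> cmod (reval ?G s) \<le> a" if "0 < Re s" for s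
    using reval_Fract[OF \<open>q \<noteq> 0\<close>] bound[OF that] by (simp add: norm_divide divide_le_eq)
  have "(\<lambda>s. poly (rnum ?G) s / poly (rden ?G) s) holomorphic_on ?RHP"
    using pointwise by (intro holomorphic_intros) auto
  moreover have "bounded (reval ?G ` ?RHP)"
    unfolding bounded_iff using pointwise by auto
  ultimately have "in_Hinf ?G"
    unfolding in_Hinf_def reval_def[abs_def] using pointwise by auto
  moreover have "(SUP s\<in>?RHP. ereal (cmod (reval ?G s))) \<le> ereal a"
    using pointwise by (intro SUP_least) auto
  ultimately show ?thesis
    by (simp add: Hinf_norm_def)
qed

theorem theorem1:
  fixes a :: real
  assumes "a > 0"
  shows "(SUP N. Hinf_norm (Ffam a N)) \<le> ereal a"
proof (rule SUP_least)
  fix N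
  show "Hinf_norm (Ffam a N) \<le> ereal a"
    unfolding Ffam_eq_Fract[OF assms]
    by (rule Hinf_norm_Fract_le[OF ladder_den_hfun_nonzero[OF assms] hfun_ladder_bound[OF assms]])
qed

end
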